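(* Let $q,t\in\mathbb N$ and let $M$ be a multigraph (without loops) with $V(M)=[t]$ and maximum degree at most $qt$. Then there is an $M$-linkage $Q=(P_{uv})_{uv\in E(M)}$ in the complete graph $K_t$ on $[t]$ such that every edge of $K_t$ lies on at most $18q$ of the paths in $Q$.
   Context: For a graph $H$ and a multigraph $M$ with $V(M)\subseteq V(H)$, an $M$-linkage in $H$ is a family of paths $(P_e)_{e\in E(M)}$ in $H$ (one per edge of $M$, counting multiplicity) such that $P_e$ has the two endpoints of $e$ as its endpoints. Degrees in multigraphs count multiplicities. *)

theory Defs
  imports Main
begin

text \<open>A loopless multigraph M on vertex set [t] = {1..t} is given as a list of
edges (pairs of endpoints); list positions index the edges, so parallel
edges are repeated entries (multiplicity).\<close>

definition multigraph_on :: "nat \<Rightarrow> (nat \<times> nat) list \<Rightarrow> bool" where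
  "multigraph_on t M \<longleftrightarrow>
     (\<forall>e \<in> set M. fst e \<in> {1..t} \<and> snd e \<in> {1..t} \<and> fst e \<noteq> snd e)"

definition mdeg :: "(nat \<times> nat) list \<Rightarrow> nat \<Rightarrow> nat" where
  "mdeg M v = length (filter (\<lambda>e. fst e = v \<or> snd e = v) M)"

text \<open>A path in the complete graph K_t on [t]: a nonempty list of distinct
vertices of [t] (any two consecutive distinct vertices are adjacent in K_t).\<close>
definition Kpath :: "nat \<Rightarrow> nat list \<Rightarrow> bool" where
  "Kpath t P \<longleftrightarrow> P \<noteq> [] \<and> distinct P \<and> set P \<subseteq> {1..t}"

definition edge_on :: "nat \<Rightarrow> nat \<Rightarrow> nat list \<Rightarrow> bool" where
  "edge_on a b P \<longleftrightarrow> (\<exists>j. Suc j < length P \<and> {P ! j, P ! Suc j} = {a, b})"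

definition linkage :: "nat \<Rightarrow> (nat \<times> nat) list \<Rightarrow> (nat \<Rightarrow> nat list) \<Rightarrow> bool" where
  "linkage t M Ps \<longleftrightarrow>
     (\<forall>i < length M. Kpath t (Ps i) \<and> hd (Ps i) = fst (M ! i) \<and> last (Ps i) = snd (M ! i))"

end

theory Submission
  imports Defs
begin

text \<open>Route every edge uv of M along a path u, w, v of length two. Choosing the
middle vertices greedily so that, for every vertex x and candidate w, at most
9q edges at x are routed through w is always possible: the candidates that are
already saturated at u or at v are fewer than (deg u + deg v)/(9q) < t - 2.
An edge ab of K_t then lies only on paths of edges at a routed through b or of
edges at b routed through a, i.e. on at most 18q paths. For t \<le> 2 the edges of
M are used directly.\<close>

definition middle_load :: "(nat \<times> nat) list \<Rightarrow> (nat \<Rightarrow> nat) \<Rightarrow> nat \<Rightarrow> nat \<Rightarrow> nat" where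
  "middle_load M mid x w =
     card {i. i < length M \<and> (fst (M!i) = x \<or> snd (M!i) = x) \<and> mid i = w}"

lemma mdeg_conv_card: "mdeg M x = card {i. i < length M \<and> (fst (M!i) = x \<or> snd (M!i) = x)}"
  by (simp add: mdeg_def length_filter_conv_card)

lemma mdeg_snoc: "mdeg (M @ [e]) x = mdeg M x + (if fst e = x \<or> snd e = x then 1 else 0)"
  by (simp add: mdeg_def)

lemma mdeg_outside:
  assumes "multigraph_on t M" "x \<notin> {1..t}"
  shows "mdeg M x = 0"
  using assms by (auto simp: mdeg_def multigraph_on_def filter_empty_conv)

lemma middle_load_snoc:
  "middle_load (M @ [e]) (mid(length M := c)) x w =
     middle_load M mid x w + (if (fst e = x \<or> snd e = x) \<and> c = w then 1 else 0)"
proof -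
  let ?S = "{i. i < length M \<and> (fst (M!i) = x \<or> snd (M!i) = x) \<and> mid i = w}"
  have "{i. i < length (M @ [e]) \<and> (fst ((M @ [e])!i) = x \<or> snd ((M @ [e])!i) = x)
            \<and> (mid(length M := c)) i = w}
        = ?S \<union> (if (fst e = x \<or> snd e = x) \<and> c = w then {length M} else {})"
    by (auto simp: nth_append less_Suc_eq)
  then show ?thesis
    unfolding middle_load_def by auto
qed

lemma card_saturated_le_mdeg:
  assumes "finite W"
  shows "card {w \<in> W. k \<le> middle_load M mid x w} * k \<le> mdeg M x"
proof -
  let ?B = "{w \<in> W. k \<le> middle_load M mid x w}"
  let ?S = "\<lambda>w. {i. i < length M \<and> (fst (M!i) = x \<or> snd (M!i) = x) \<and> mid i = w}"
  have "card ?B * k \<le> (\<Sum>w\<in>?B. middle_load M mid x w)"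
    using sum_bounded_below[of ?B k "middle_load M mid x"] by (simp add: mult.commute)
  also have "\<dots> = card (\<Union>w\<in>?B. ?S w)"
    unfolding middle_load_def by (rule card_UN_disjoint[symmetric]) (use assms in auto)
  also have "\<dots> \<le> mdeg M x"
    unfolding mdeg_conv_card by (rule card_mono) auto
  finally show ?thesis .
qed

lemma greedy_middle_vertices:
  assumes "finite W" and "\<forall>x. 2 * mdeg M x \<le> k * (card W - 2)"
  shows "\<exists>mid. (\<forall>i<length M. mid i \<in> W - {fst (M!i), snd (M!i)})
              \<and> (\<forall>x w. middle_load M mid x w \<le> k)"
  using assms(2)
proof (induction M rule: rev_induct)
  case Nil
  then show ?case by (simp add: middle_load_def)
next
  case (snoc e M)
  obtain u v where e: "e = (u, v)" by (cases e)
  have "2 * mdeg M x \<le> k * (card W - 2)" for x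
    using snoc.prems[rule_format, of x] by (simp add: mdeg_snoc split: if_splits)
  then obtain mid where mid_in: "\<forall>i<length M. mid i \<in> W - {fst (M!i), snd (M!i)}"
    and load: "\<forall>x w. middle_load M mid x w \<le> k"
    using snoc.IH by blast
  define Bu where "Bu = {w \<in> W. k \<le> middle_load M mid u w}"
  define Bv where "Bv = {w \<in> W. k \<le> middle_load M mid v w}"
  have "2 * (mdeg M u + 1) \<le> k * (card W - 2)" "2 * (mdeg M v + 1) \<le> k * (card W - 2)"
    using snoc.prems[rule_format, of u] snoc.prems[rule_format, of v] by (auto simp: e mdeg_snoc)
  moreover have "card Bu * k \<le> mdeg M u" "card Bv * k \<le> mdeg M v"
    unfolding Bu_def Bv_def using assms(1) by (auto intro: card_saturated_le_mdeg)
  ultimately have "k * (card Bu + card Bv) < k * (card W - 2)"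
    by (simp add: algebra_simps)
  then have "card Bu + card Bv < card W - 2"
    by (rule mult_less_cancel1[THEN iffD1, THEN conjunct2])
  moreover have "card {u, v} \<le> 2"
    by (cases "u = v") auto
  then have "card ({u, v} \<union> Bu \<union> Bv) \<le> 2 + card Bu + card Bv"
    using card_Un_le[of "{u, v} \<union> Bu" Bv] card_Un_le[of "{u, v}" Bu] by linarith
  ultimately have "card ({u, v} \<union> Bu \<union> Bv) < card W" by linarith
  then have "\<not> W \<subseteq> {u, v} \<union> Bu \<union> Bv"
    using card_mono[of "{u, v} \<union> Bu \<union> Bv" W] by (auto simp: Bu_def Bv_def assms(1))
  then obtain w where w: "w \<in> W" "w \<noteq> u" "w \<noteq> v" "w \<notin> Bu" "w \<notin> Bv" by blast
  have "\<forall>x c. middle_load (M @ [e]) (mid(length M := w)) x c \<le> k"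
    using load w by (auto simp: middle_load_snoc e Bu_def Bv_def less_Suc_eq_le)
  moreover have "\<forall>i<length (M @ [e]). (mid(length M := w)) i \<in> W - {fst ((M @ [e])!i), snd ((M @ [e])!i)}"
    using mid_in w by (auto simp: e nth_append less_Suc_eq)
  ultimately show ?case by blast
qed

lemma edge_on_singleton: "\<not> edge_on a b [x]"
  by (simp add: edge_on_def)

lemma edge_on_Cons_Cons:
  "edge_on a b (x # y # P) \<longleftrightarrow> {x, y} = {a, b} \<or> edge_on a b (y # P)"
proof
  assume "edge_on a b (x # y # P)"
  then obtain j where "Suc j < length (x # y # P)" "{(x # y # P) ! j, (x # y # P) ! Suc j} = {a, b}"
    unfolding edge_on_def by blast
  then show "{x, y} = {a, b} \<or> edge_on a b (y # P)"
    by (cases j) (auto simp: edge_on_def)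
next
  assume "{x, y} = {a, b} \<or> edge_on a b (y # P)"
  then show "edge_on a b (x # y # P)"
    unfolding edge_on_def by (metis Suc_less_eq length_Cons nth_Cons_0 nth_Cons_Suc zero_less_Suc)
qed

lemma linkage_direct:
  assumes "multigraph_on t M"
  shows "linkage t M (\<lambda>i. [fst (M!i), snd (M!i)])"
  using assms unfolding linkage_def Kpath_def multigraph_on_def by (auto dest: nth_mem)

lemma linkage_via_middle:
  assumes "multigraph_on t M" and "\<forall>i<length M. mid i \<in> {1..t} - {fst (M!i), snd (M!i)}"
  shows "linkage t M (\<lambda>i. [fst (M!i), mid i, snd (M!i)])"
  using assms unfolding linkage_def Kpath_def multigraph_on_def by (auto dest: nth_mem)

lemma card_edge_on_direct_le_mdeg:
  "card {i. i < length M \<and> edge_on a b [fst (M!i), snd (M!i)]} \<le> mdeg M a"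
  unfolding mdeg_conv_card
  by (rule card_mono) (auto simp: edge_on_Cons_Cons edge_on_singleton doubleton_eq_iff)

lemma card_edge_on_via_middle_le:
  "card {i. i < length M \<and> edge_on a b [fst (M!i), mid i, snd (M!i)]}
     \<le> middle_load M mid b a + middle_load M mid a b"
proof -
  have "card {i. i < length M \<and> edge_on a b [fst (M!i), mid i, snd (M!i)]}
        \<le> card ({i. i < length M \<and> (fst (M!i) = b \<or> snd (M!i) = b) \<and> mid i = a}
               \<union> {i. i < length M \<and> (fst (M!i) = a \<or> snd (M!i) = a) \<and> mid i = b})"
    by (rule card_mono) (auto simp: edge_on_Cons_Cons edge_on_singleton doubleton_eq_iff)
  also have "\<dots> \<le> middle_load M mid b a + middle_load M mid a b"
    unfolding middle_load_def by (rule card_Un_le)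
  finally show ?thesis .
qed

theorem mainTheorem16:
  fixes q t :: nat and M :: "(nat \<times> nat) list"
  assumes "multigraph_on t M"
    and "\<forall>v \<in> {1..t}. mdeg M v \<le> q * t"
  shows "\<exists>Ps. linkage t M Ps \<and>
           (\<forall>a \<in> {1..t}. \<forall>b \<in> {1..t}. a \<noteq> b \<longrightarrow>
              card {i. i < length M \<and> edge_on a b (Ps i)} \<le> 18 * q)"
proof (cases "t \<le> 2")
  case True
  have "mdeg M a \<le> 18 * q" if "a \<in> {1..t}" for a
  proof -
    have "mdeg M a \<le> q * t" using assms(2) that by blast
    also have "\<dots> \<le> 18 * q" using True by simp
    finally show ?thesis .
  qed
  then show ?thesis
    using linkage_direct[OF assms(1)] card_edge_on_direct_le_mdeg le_trans by blast
next
  case False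
  have "2 * mdeg M x \<le> 9 * q * (card {1..t} - 2)" for x
  proof (cases "x \<in> {1..t}")
    case True
    then have "2 * mdeg M x \<le> q * (2 * t)"
      using assms(2) by simp
    also have "\<dots> \<le> q * (9 * (t - 2))"
      using False by (intro mult_le_mono2) linarith
    finally show ?thesis
      by (simp add: ac_simps)
  qed (simp add: mdeg_outside[OF assms(1)])
  then obtain mid where "\<forall>i<length M. mid i \<in> {1..t} - {fst (M!i), snd (M!i)}"
    and load: "\<forall>x w. middle_load M mid x w \<le> 9 * q"
    using greedy_middle_vertices[of "{1..t}" M "9 * q"] by auto
  moreover have "middle_load M mid b a + middle_load M mid a b \<le> 18 * q" for a b
    using load[rule_format, of b a] load[rule_format, of a b] by linarith
  ultimately show ?thesis
    using linkage_via_middle[OF assms(1)] card_edge_on_via_middle_le le_trans by blast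
qed

end
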